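(* Let $\alpha$ be a cylindric partition on $\mathcal C_{k,n}$ and $t$ a nonnegative integer. The number of marble games with $t$ turns that start with the arrangement $\operatorname{Arr}(\alpha)$ equals the number of marble games with $t$ turns that end with the arrangement $\operatorname{Arr}(\alpha)$, which in turn equals the number of marble games with $t$ turns that start with $\operatorname{Arr}(\alpha)$ but in which marbles are passed counterclockwise (each $p_i$ passes to $p_{i-1}$). These equalities remain true if every turn is restricted so that exactly one marble changes hands on every turn.
   Context: Fix integers $n>k\ge1$. A cylindric partition is a weakly decreasing integer sequence $(\alpha_m)_{m\in\mathbb Z}$ with $\alpha_m=\alpha_{m+k}+n-k$. There are $k$ people $p_0,\dots,p_{k-1}$ in a circle, indices taken mod $k$, with $p_{i+1}$ the clockwise neighbour of $p_i$. The arrangement $\operatorname{Arr}(\alpha)$ gives $p_i$ exactly $\alpha_{i-1}-\alpha_i$ marbles ($n-k$ marbles in total). A (clockwise) turn is a tuple $(a_0,\dots,a_{k-1})$ of nonnegative integers in which simultaneously each $p_i$ passes $a_i$ marbles to $p_{i+1}$, where $a_i$ is at most the number of marbles $p_i$ holds before the turn. A marble game with $t$ turns is an initial arrangement of the $n-k$ marbles together with a sequence of $t$ successive valid turns; it ends with the arrangement obtained after the last turn. *)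

theory Defs
  imports Main
begin

definition cylindric :: "nat \<Rightarrow> nat \<Rightarrow> (int \<Rightarrow> int) \<Rightarrow> bool" where
  "cylindric k n \<alpha> \<longleftrightarrow> (\<forall>m. \<alpha> (m + 1) \<le> \<alpha> m) \<and>
     (\<forall>m. \<alpha> m = \<alpha> (m + int k) + (int n - int k))"

text \<open>Arrangements of marbles among people p_0..p_{k-1}: lists of length k,
  entry i = number of marbles of p_i.\<close>
definition Arr :: "nat \<Rightarrow> (int \<Rightarrow> int) \<Rightarrow> nat list" where
  "Arr k \<alpha> = map (\<lambda>i. nat (\<alpha> (int i - 1) - \<alpha> (int i))) [0..<k]"

definition valid_turn :: "nat list \<Rightarrow> nat list \<Rightarrow> bool" where
  "valid_turn c a \<longleftrightarrow> length a = length c \<and> (\<forall>i<length c. a ! i \<le> c ! i)"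

text \<open>Effect of a turn. cw = True: p_i passes to p_{i+1} (clockwise);
  cw = False: p_i passes to p_{i-1} (counterclockwise). Indices mod k.\<close>
definition step :: "bool \<Rightarrow> nat list \<Rightarrow> nat list \<Rightarrow> nat list" where
  "step cw c a = (let k = length c in
     map (\<lambda>i. c ! i - a ! i + a ! (if cw then (i + k - 1) mod k else (i + 1) mod k)) [0..<k])"

fun valid_game :: "bool \<Rightarrow> (nat list \<Rightarrow> bool) \<Rightarrow> nat list \<Rightarrow> nat list list \<Rightarrow> bool" where
  "valid_game cw P c [] = True"
| "valid_game cw P c (a # as) = (valid_turn c a \<and> P a \<and> valid_game cw P (step cw c a) as)"

fun final_arr :: "bool \<Rightarrow> nat list \<Rightarrow> nat list list \<Rightarrow> nat list" where
  "final_arr cw c [] = c"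
| "final_arr cw c (a # as) = final_arr cw (step cw c a) as"

definition games :: "nat \<Rightarrow> nat \<Rightarrow> bool \<Rightarrow> (nat list \<Rightarrow> bool) \<Rightarrow> nat \<Rightarrow> (nat list \<times> nat list list) set" where
  "games k n cw P t = {(c, as). length c = k \<and> sum_list c = n - k \<and> length as = t \<and> valid_game cw P c as}"

definition games_starting :: "nat \<Rightarrow> nat \<Rightarrow> bool \<Rightarrow> (nat list \<Rightarrow> bool) \<Rightarrow> nat \<Rightarrow> nat list \<Rightarrow> (nat list \<times> nat list list) set" where
  "games_starting k n cw P t c0 = {g \<in> games k n cw P t. fst g = c0}"

definition games_ending :: "nat \<Rightarrow> nat \<Rightarrow> bool \<Rightarrow> (nat list \<Rightarrow> bool) \<Rightarrow> nat \<Rightarrow> nat list \<Rightarrow> (nat list \<times> nat list list) set" where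
  "games_ending k n cw P t c1 = {g \<in> games k n cw P t. final_arr cw (fst g) (snd g) = c1}"

definition one_marble :: "nat list \<Rightarrow> bool" where
  "one_marble a \<longleftrightarrow> sum_list a = 1"

end

theory Submission
  imports Defs "HOL-Library.Multiset"
begin

text \<open>A game can be run backwards: in
reverse order, everybody hands back in the opposite direction what they received. This identifies
clockwise games ending at c with counterclockwise games starting at c, so everything reduces to
comparing clockwise and counterclockwise turn sequences from the same arrangement c.

Reflecting the circle turns counterclockwise sequences from c into clockwise sequences from the
reversed arrangement. Without restriction, replacing each turn a by c - a (everybody passes what
they would otherwise keep) on the reflected circle matches clockwise sequences from c with those
from the reflected arrangement, up to a rotation, which changes no count. With one marble per
turn, the two counts are the t-th iterates of the clockwise and the counterclockwise transition
operators applied to the constant 1; these operators commute and agree on constants.\<close>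

lemma mset_rotate1 [simp]: "mset (rotate1 xs) = mset xs"
  by (induction xs) simp_all

lemma mset_rotate [simp]: "mset (rotate n xs) = mset xs"
  by (induction n) simp_all

lemma list_all2_rotate1: "list_all2 R (rotate1 xs) (rotate1 ys) \<longleftrightarrow> list_all2 R xs ys"
proof (cases "length xs = length ys")
  case True
  then show ?thesis by (cases xs; cases ys) (auto simp: list_all2_append)
qed (auto dest: list_all2_lengthD)

lemma bij_rev: "bij rev"
  by (rule o_bij[of rev]) auto

lemma sum_sum_eq_off_graph:
  fixes X Y :: "nat \<Rightarrow> nat \<Rightarrow> 'a::comm_monoid_add"
  assumes graph: "\<And>i. i < k \<Longrightarrow> \<sigma> i < k"
    and off: "\<And>i p. i < k \<Longrightarrow> p < k \<Longrightarrow> p \<noteq> \<sigma> i \<Longrightarrow> X i p = Y i p"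
    and on: "(\<Sum>i<k. X i (\<sigma> i)) = (\<Sum>i<k. Y i (\<sigma> i))"
  shows "(\<Sum>i<k. \<Sum>p<k. X i p) = (\<Sum>i<k. \<Sum>p<k. Y i p)"
proof -
  have sum_at: "(\<Sum>p<k. Z i p) = Z i (\<sigma> i) + (\<Sum>p\<in>{..<k} - {\<sigma> i}. Z i p)"
    if "i < k" for Z :: "nat \<Rightarrow> nat \<Rightarrow> 'a" and i
    using graph[OF that] by (simp add: sum.remove)
  have "(\<Sum>i<k. \<Sum>p<k. X i p) = (\<Sum>i<k. X i (\<sigma> i)) + (\<Sum>i<k. \<Sum>p\<in>{..<k} - {\<sigma> i}. X i p)"
    by (simp add: sum_at sum.distrib)
  also have "(\<Sum>i<k. \<Sum>p\<in>{..<k} - {\<sigma> i}. X i p) = (\<Sum>i<k. \<Sum>p\<in>{..<k} - {\<sigma> i}. Y i p)"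
    using off by (intro sum.cong) auto
  also have "(\<Sum>i<k. X i (\<sigma> i)) + \<dots> = (\<Sum>i<k. \<Sum>p<k. Y i p)"
    by (simp add: on sum_at sum.distrib)
  finally show ?thesis .
qed

text \<open>\<open>received cw a ! i\<close> is the number of marbles that p_i receives in the turn a.\<close>

definition received :: "bool \<Rightarrow> nat list \<Rightarrow> nat list" where
  "received cw a = rotate (if cw then length a - 1 else 1) a"

lemma length_received [simp]: "length (received cw a) = length a"
  by (simp add: received_def)

lemma length_step [simp]: "length (step cw c a) = length c"
  by (simp add: step_def Let_def)

lemma nth_step:
  assumes "length a = length c" "i < length c"
  shows "step cw c a ! i = c ! i - a ! i + received cw a ! i"
proof -
  have "i + length c - 1 = length c - 1 + i" "i + 1 = 1 + i" using assms(2) by simp_all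
  with assms show ?thesis by (simp add: step_def Let_def received_def nth_rotate)
qed

lemma mset_received [simp]: "mset (received cw a) = mset a"
  by (simp add: received_def)

lemma received_received [simp]: "received (\<not> cw) (received cw a) = a"
proof (cases "a = []")
  case False
  then show ?thesis
    by (auto simp: received_def rotate_rotate intro: rotate_id)
qed (simp add: received_def)

lemma received_rotate1: "received cw (rotate1 a) = rotate1 (received cw a)"
  by (simp add: received_def rotate1_rotate_swap)

lemma received_rev: "received cw (rev a) = rev (received (\<not> cw) a)"
proof (cases "length a \<le> 1")
  case False
  then show ?thesis by (auto simp: received_def rotate_rev)
qed (simp add: received_def)

lemma received_False: "received False a = rotate1 a"
  by (simp add: received_def)

lemma valid_turn_iff_list_all2: "valid_turn c a \<longleftrightarrow> list_all2 (\<le>) a c"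
  by (auto simp: valid_turn_def list_all2_conv_all_nth)

lemma sum_list_step:
  assumes "valid_turn c a"
  shows "sum_list (step cw c a) = sum_list c"
proof -
  have l: "length a = length c" and le: "\<And>i. i < length c \<Longrightarrow> a ! i \<le> c ! i"
    using assms by (auto simp: valid_turn_def)
  have "sum_list (step cw c a) = (\<Sum>i<length c. c ! i - a ! i) + (\<Sum>i<length c. received cw a ! i)"
    by (simp add: sum_list_sum_nth atLeast0LessThan nth_step l sum.distrib)
  also have "(\<Sum>i<length c. received cw a ! i) = (\<Sum>i<length c. a ! i)"
    using sum_mset_sum_list[of "received cw a"] sum_mset_sum_list[of a]
    by (simp add: sum_list_sum_nth atLeast0LessThan l)
  also have "(\<Sum>i<length c. c ! i - a ! i) + (\<Sum>i<length c. a ! i) = sum_list c"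
    by (simp add: sum.distrib[symmetric] le sum_list_sum_nth atLeast0LessThan)
  finally show ?thesis .
qed

lemma valid_turn_received:
  assumes "valid_turn c a"
  shows "valid_turn (step cw c a) (received cw a)"
  using assms by (auto simp: valid_turn_def nth_step)

lemma step_received:
  assumes "valid_turn c a"
  shows "step (\<not> cw) (step cw c a) (received cw a) = c"
  using assms by (intro nth_equalityI) (auto simp: valid_turn_def nth_step)

lemma step_rotate1:
  assumes "length a = length c"
  shows "step cw (rotate1 c) (rotate1 a) = rotate1 (step cw c a)"
proof (rule nth_equalityI)
  fix i assume "i < length (step cw (rotate1 c) (rotate1 a))"
  then have "i < length c" by simp
  then have "Suc i mod length c < length c" by (intro mod_less_divisor) auto
  then show "step cw (rotate1 c) (rotate1 a) ! i = rotate1 (step cw c a) ! i"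
    using assms \<open>i < length c\<close> by (simp add: nth_step nth_rotate1 received_rotate1)
qed simp

lemma step_rev:
  assumes "length a = length c"
  shows "step cw (rev c) (rev a) = rev (step (\<not> cw) c a)"
  using assms by (intro nth_equalityI) (simp_all add: nth_step rev_nth received_rev)

lemma step_complement_rev:
  assumes "valid_turn c a"
  shows "step True (rev c) (rev (map2 (-) c a)) = rev (rotate1 (step True c a))"
proof (rule nth_equalityI)
  have l: "length a = length c" and le: "\<And>i. i < length c \<Longrightarrow> a ! i \<le> c ! i"
    using assms by (auto simp: valid_turn_def)
  fix i assume "i < length (step True (rev c) (rev (map2 (-) c a)))"
  then have i: "i < length c" by (simp add: l)
  define j where "j = length c - Suc i"
  define m where "m = Suc j mod length c"
  have j: "j < length c" using i by (simp add: j_def)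
  then have m: "m < length c" unfolding m_def by (intro mod_less_divisor) auto
  have "received True a ! m = rotate1 (received True a) ! j"
    using j l by (simp add: nth_rotate1 m_def)
  also have "\<dots> = a ! j"
    using received_received[of True a] by (simp add: received_False)
  finally have received_m: "received True a ! m = a ! j" .
  have rj: "rev xs ! i = xs ! j" if "length xs = length c" for xs :: "nat list"
    using that i by (simp add: rev_nth j_def)
  have "step True (rev c) (rev (map2 (-) c a)) ! i = (c ! j - (c ! j - a ! j)) + (c ! m - a ! m)"
    using i j m l by (simp add: nth_step rj received_rev received_False nth_rotate1 m_def)
  also have "\<dots> = a ! j + (c ! m - a ! m)" using le[OF j] by simp
  also have "\<dots> = rev (rotate1 (step True c a)) ! i"
    using j m l received_m by (simp add: rj nth_rotate1 nth_step m_def)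
  finally show "step True (rev c) (rev (map2 (-) c a)) ! i = rev (rotate1 (step True c a)) ! i" .
qed (simp add: valid_turn_def)

definition turns :: "(nat list \<Rightarrow> bool) \<Rightarrow> nat list \<Rightarrow> nat list set" where
  "turns P c = {a. valid_turn c a \<and> P a}"

definition plays :: "bool \<Rightarrow> (nat list \<Rightarrow> bool) \<Rightarrow> nat \<Rightarrow> nat list \<Rightarrow> nat list list set" where
  "plays cw P t c = {as. length as = t \<and> valid_game cw P c as}"

lemma finite_turns: "finite (turns P c)"
proof (rule finite_subset)
  show "turns P c \<subseteq> {a. set a \<subseteq> {..sum_list c} \<and> length a = length c}"
  proof safe
    fix a x assume "a \<in> turns P c" "x \<in> set a"
    then obtain i where "i < length c" "x = a ! i" "a ! i \<le> c ! i"
      by (auto simp: turns_def valid_turn_def in_set_conv_nth)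
    then show "x \<le> sum_list c" using elem_le_sum_list[of i c] by simp
  qed (simp add: turns_def valid_turn_def)
  show "finite {a. set a \<subseteq> {..sum_list c} \<and> length a = length c}"
    by (rule finite_lists_length_eq) simp
qed

lemma plays_0: "plays cw P 0 c = {[]}"
  by (auto simp: plays_def)

lemma plays_Suc: "plays cw P (Suc t) c = (\<Union>a\<in>turns P c. (#) a ` plays cw P t (step cw c a))"
  by (auto simp: plays_def turns_def length_Suc_conv)

lemma finite_plays: "finite (plays cw P t c)"
  by (induction t arbitrary: c) (simp_all add: plays_0 plays_Suc finite_turns)

lemma card_plays_0 [simp]: "card (plays cw P 0 c) = 1"
  by (simp add: plays_0)

lemma card_plays_Suc:
  "card (plays cw P (Suc t) c) = (\<Sum>a\<in>turns P c. card (plays cw P t (step cw c a)))"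
  unfolding plays_Suc
  by (subst card_UN_disjoint) (auto simp: finite_turns finite_plays card_image)

lemma card_plays_transport:
  assumes turns_bij: "\<And>c. bij_betw (g c) (turns P c) (turns P' (f c))"
    and step_eq: "\<And>c a. a \<in> turns P c \<Longrightarrow> step cw' (f c) (g c a) = f (step cw c a)"
  shows "card (plays cw' P' t (f c)) = card (plays cw P t c)"
proof (induction t arbitrary: c)
  case (Suc t)
  have "card (plays cw' P' (Suc t) (f c)) =
      (\<Sum>a\<in>turns P c. card (plays cw' P' t (step cw' (f c) (g c a))))"
    unfolding card_plays_Suc by (rule sum.reindex_bij_betw[symmetric, OF turns_bij])
  also have "\<dots> = card (plays cw P (Suc t) c)"
    unfolding card_plays_Suc using step_eq Suc.IH by (intro sum.cong) simp_all
  finally show ?case .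
qed simp

lemma bij_betw_turns:
  assumes "bij f"
    and le: "\<And>xs ys. list_all2 (\<le>) (f xs) (f ys) \<longleftrightarrow> list_all2 (\<le>) xs ys"
    and mset: "\<And>xs. mset (f xs) = mset xs"
    and sym: "\<And>a b. mset a = mset b \<Longrightarrow> P a = P b"
  shows "bij_betw f (turns P c) (turns P (f c))"
proof (rule bij_betw_imageI)
  show "inj_on f (turns P c)"
    using bij_is_inj[OF assms(1)] by (rule inj_on_subset) simp
  have turn_iff: "f a \<in> turns P (f c) \<longleftrightarrow> a \<in> turns P c" for a
    using le[of a c] sym[OF mset[of a]] by (simp add: turns_def valid_turn_iff_list_all2)
  show "f ` turns P c = turns P (f c)"
  proof safe
    fix b assume "b \<in> turns P (f c)"
    moreover obtain a where "b = f a" using bij_is_surj[OF assms(1)] by blast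
    ultimately show "b \<in> f ` turns P c" using turn_iff by blast
  qed (simp add: turn_iff)
qed

lemma card_plays_rotate1:
  assumes "\<And>a b. mset a = mset b \<Longrightarrow> P a = P b"
  shows "card (plays cw P t (rotate1 c)) = card (plays cw P t c)"
proof (rule card_plays_transport)
  show "bij_betw rotate1 (turns P c) (turns P (rotate1 c))" for c
    using bij_rotate1 list_all2_rotate1 mset_rotate1 assms by (rule bij_betw_turns)
  show "step cw (rotate1 c) (rotate1 a) = rotate1 (step cw c a)" if "a \<in> turns P c" for c a
    using that by (simp add: turns_def valid_turn_def step_rotate1)
qed

lemma card_plays_rev:
  assumes "\<And>a b. mset a = mset b \<Longrightarrow> P a = P b"
  shows "card (plays cw P t (rev c)) = card (plays (\<not> cw) P t c)"
proof (rule card_plays_transport)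
  show "bij_betw rev (turns P c) (turns P (rev c))" for c
    using bij_rev list_all2_rev mset_rev assms by (rule bij_betw_turns)
  show "step cw (rev c) (rev a) = rev (step (\<not> cw) c a)" if "a \<in> turns P c" for c a
    using that by (simp add: turns_def valid_turn_def step_rev)
qed

lemma complement_turn:
  assumes "valid_turn c a"
  shows "valid_turn c (map2 (-) c a)" "map2 (-) c (map2 (-) c a) = a"
  using assms by (auto simp: valid_turn_def intro!: nth_equalityI)

lemma bij_betw_complement: "bij_betw (map2 (-) c) (turns (\<lambda>_. True) c) (turns (\<lambda>_. True) c)"
  by (rule bij_betw_byWitness[where f'="map2 (-) c"]) (auto simp: turns_def complement_turn)

lemma card_plays_unrestricted_rev:
  "card (plays True (\<lambda>_. True) t (rev c)) = card (plays True (\<lambda>_. True) t c)"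
proof (induction t arbitrary: c)
  case (Suc t)
  let ?U = "\<lambda>_ :: nat list. True"
  have "bij_betw (rev \<circ> map2 (-) c) (turns ?U c) (turns ?U (rev c))"
    by (rule bij_betw_trans[OF bij_betw_complement bij_betw_turns[OF bij_rev]]) simp_all
  then have "card (plays True ?U (Suc t) (rev c)) =
      (\<Sum>a\<in>turns ?U c. card (plays True ?U t (step True (rev c) (rev (map2 (-) c a)))))"
    unfolding card_plays_Suc by (subst sum.reindex_bij_betw[symmetric]) (simp_all add: comp_def)
  also have "\<dots> = (\<Sum>a\<in>turns ?U c. card (plays True ?U t (rotate1 (step True c a))))"
    by (intro sum.cong) (simp_all add: turns_def step_complement_rev Suc.IH)
  also have "\<dots> = card (plays True ?U (Suc t) c)"
    by (simp add: card_plays_Suc card_plays_rotate1)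
  finally show ?case .
qed simp

lemma card_plays_unrestricted_cw_ccw:
  "card (plays True (\<lambda>_. True) t c) = card (plays False (\<lambda>_. True) t c)"
  using card_plays_rev[of "\<lambda>_. True" True t c] card_plays_unrestricted_rev[of t c] by simp

definition neighbour :: "bool \<Rightarrow> nat \<Rightarrow> nat \<Rightarrow> nat" where
  "neighbour cw k i = (if cw then Suc i mod k else (i + k - 1) mod k)"

lemma neighbour_eq:
  assumes "i < k"
  shows "neighbour cw k i = (if cw then if Suc i = k then 0 else Suc i else if i = 0 then k - 1 else i - 1)"
proof -
  have "(i + k - 1) mod k = (if i = 0 then k - 1 else i - 1)"
  proof (cases "i = 0")
    case False
    then obtain j where "i = Suc j" by (cases i) auto
    then show ?thesis using assms by simp
  qed (use assms in simp)
  with assms show ?thesis by (auto simp: neighbour_def mod_Suc)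
qed

lemma neighbour_less: "i < k \<Longrightarrow> neighbour cw k i < k"
  by (auto simp: neighbour_eq)

lemma neighbour_neighbour: "i < k \<Longrightarrow> neighbour (\<not> cw) k (neighbour cw k i) = i"
  by (auto simp: neighbour_eq neighbour_less)

lemma nth_received: "i < length a \<Longrightarrow> received cw a ! i = a ! neighbour (\<not> cw) (length a) i"
  by (auto simp: received_def neighbour_def nth_rotate add.commute)

definition unit_turn :: "nat \<Rightarrow> nat \<Rightarrow> nat list" where
  "unit_turn k i = (replicate k 0)[i := 1]"

lemma length_unit_turn [simp]: "length (unit_turn k i) = k"
  by (simp add: unit_turn_def)

lemma nth_unit_turn: "l < k \<Longrightarrow> unit_turn k i ! l = (if l = i then 1 else 0)"
  by (simp add: unit_turn_def nth_list_update)

lemma received_unit_turn: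
  assumes "i < k"
  shows "received cw (unit_turn k i) = unit_turn k (neighbour cw k i)"
proof (rule nth_equalityI)
  fix l assume "l < length (received cw (unit_turn k i))"
  then have l: "l < k" by simp
  have "neighbour (\<not> cw) k l = i \<longleftrightarrow> l = neighbour cw k i"
    using l assms neighbour_neighbour[of l k "\<not> cw"] neighbour_neighbour[of i k cw] by auto
  then show "received cw (unit_turn k i) ! l = unit_turn k (neighbour cw k i) ! l"
    using l by (simp add: nth_received nth_unit_turn neighbour_less)
qed simp

lemma nth_step_unit_turn:
  assumes "length c = k" "i < k" "l < k"
  shows "step cw c (unit_turn k i) ! l =
    c ! l - (if l = i then 1 else 0) + (if l = neighbour cw k i then 1 else 0)"
  using assms by (simp add: nth_step received_unit_turn nth_unit_turn)

lemma sum_list_eq_1_imp_unit_turn: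
  "sum_list (a :: nat list) = 1 \<Longrightarrow> \<exists>i<length a. a = unit_turn (length a) i"
proof (induction a)
  case (Cons x xs)
  show ?case
  proof (cases x)
    case 0
    with Cons obtain i where "i < length xs" "xs = unit_turn (length xs) i" by auto
    with 0 show ?thesis by (intro exI[of _ "Suc i"]) (simp add: unit_turn_def)
  next
    case (Suc y)
    with Cons.prems have "x = 1" "xs = replicate (length xs) 0"
      by (auto simp: replicate_length_same)
    then show ?thesis by (intro exI[of _ 0]) (metis length_Cons list_update_code(2) replicate_Suc unit_turn_def zero_less_Suc)
  qed
qed simp

lemma turns_one_marble:
  "turns one_marble c = unit_turn (length c) ` {i. i < length c \<and> 0 < c ! i}"
proof safe
  fix a assume a: "a \<in> turns one_marble c"
  then obtain i where i: "i < length c" "a = unit_turn (length c) i"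
    using sum_list_eq_1_imp_unit_turn[of a] by (auto simp: turns_def valid_turn_def one_marble_def)
  moreover have "a ! i \<le> c ! i" using a i by (simp add: turns_def valid_turn_def)
  ultimately show "a \<in> unit_turn (length c) ` {i. i < length c \<and> 0 < c ! i}"
    by (auto simp: nth_unit_turn)
next
  fix i assume i: "i < length c" "0 < c ! i"
  then have "sum_list (unit_turn (length c) i) = 1"
    by (simp add: unit_turn_def sum_list_update)
  with i show "unit_turn (length c) i \<in> turns one_marble c"
    by (auto simp: turns_def valid_turn_def one_marble_def nth_unit_turn)
qed

definition pass_one :: "bool \<Rightarrow> (nat list \<Rightarrow> nat) \<Rightarrow> nat list \<Rightarrow> nat" where
  "pass_one cw g c = (\<Sum>i<length c. if 0 < c ! i then g (step cw c (unit_turn (length c) i)) else 0)"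

lemma card_plays_one_marble_Suc:
  "card (plays cw one_marble (Suc t) c) = pass_one cw (\<lambda>c. card (plays cw one_marble t c)) c"
proof -
  have "inj_on (unit_turn (length c)) {i. i < length c \<and> 0 < c ! i}"
    by (rule inj_onI) (metis (no_types, lifting) mem_Collect_eq nth_unit_turn one_neq_zero)
  then have "card (plays cw one_marble (Suc t) c) =
      (\<Sum>i\<in>{i\<in>{..<length c}. 0 < c ! i}. card (plays cw one_marble t (step cw c (unit_turn (length c) i))))"
    by (simp add: card_plays_Suc turns_one_marble sum.reindex)
  also have "\<dots> = pass_one cw (\<lambda>c. card (plays cw one_marble t c)) c"
    unfolding pass_one_def by (rule sum.inter_filter) simp
  finally show ?thesis .
qed

lemma card_plays_one_marble: "card (plays cw one_marble t c) = (pass_one cw ^^ t) (\<lambda>_. 1) c"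
  by (induction t arbitrary: c) (simp_all add: card_plays_one_marble_Suc)

lemma unit_turns_commute:
  fixes c :: "nat list"
  defines "e \<equiv> unit_turn (length c)"
  assumes i: "i < length c" and p: "p < length c"
    and ij: "p \<noteq> neighbour cw (length c) i" and pq: "i \<noteq> neighbour cw' (length c) p"
  shows "(0 < c ! i \<and> 0 < step cw c (e i) ! p) \<longleftrightarrow> (0 < c ! p \<and> 0 < step cw' c (e p) ! i)"
    and "0 < c ! i \<Longrightarrow> 0 < step cw c (e i) ! p \<Longrightarrow>
      step cw' (step cw c (e i)) (e p) = step cw (step cw' c (e p)) (e i)"
proof -
  show "(0 < c ! i \<and> 0 < step cw c (e i) ! p) \<longleftrightarrow> (0 < c ! p \<and> 0 < step cw' c (e p) ! i)"
    using i p ij pq by (auto simp: e_def nth_step_unit_turn)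
  assume "0 < c ! i" "0 < step cw c (e i) ! p"
  then show "step cw' (step cw c (e i)) (e p) = step cw (step cw' c (e p)) (e i)"
    using i p ij pq by (intro nth_equalityI) (auto simp: e_def nth_step_unit_turn)
qed

lemma step_unit_turn_back:
  assumes "i < length c" "0 < c ! i"
  shows "step (\<not> cw) (step cw c (unit_turn (length c) i)) (unit_turn (length c) (neighbour cw (length c) i)) = c"
proof -
  have "valid_turn c (unit_turn (length c) i)"
    using assms by (simp add: valid_turn_def nth_unit_turn)
  from step_received[OF this, of cw] show ?thesis
    using assms(1) by (simp add: received_unit_turn)
qed

lemma sum_reindex_neighbour: "(\<Sum>i<k. f (neighbour cw k i)) = (\<Sum>i<k. f i)"
  by (rule sum.reindex_bij_witness[where j="neighbour cw k" and i="neighbour (\<not> cw) k"])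
    (auto simp: neighbour_less neighbour_neighbour dest: neighbour_neighbour[of _ k "\<not> cw"])

lemma pass_one_commute: "pass_one cw (pass_one (\<not> cw) g) c = pass_one (\<not> cw) (pass_one cw g) c"
proof -
  let ?k = "length c" and ?e = "unit_turn (length c)" and ?nb = "neighbour cw (length c)"
  define X where "X i p = (if 0 < c ! i \<and> 0 < step cw c (?e i) ! p
    then g (step (\<not> cw) (step cw c (?e i)) (?e p)) else 0)" for i p
  define Y where "Y i p = (if 0 < c ! p \<and> 0 < step (\<not> cw) c (?e p) ! i
    then g (step cw (step (\<not> cw) c (?e p)) (?e i)) else 0)" for i p
  have "pass_one cw (pass_one (\<not> cw) g) c = (\<Sum>i<?k. \<Sum>p<?k. X i p)"
    unfolding pass_one_def X_def length_step by (intro sum.cong) auto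
  also have "\<dots> = (\<Sum>i<?k. \<Sum>p<?k. Y i p)"
    \<comment> \<open>Off the graph of the neighbour map the two moves commute; on it, a marble is passed and
      handed straight back.\<close>
  proof (rule sum_sum_eq_off_graph[where \<sigma> = ?nb])
    fix i p assume i: "i < ?k" and p: "p < ?k" and "p \<noteq> ?nb i"
    moreover have "i \<noteq> neighbour (\<not> cw) ?k p"
      using \<open>p \<noteq> ?nb i\<close> neighbour_neighbour[OF p, of "\<not> cw"] by auto
    ultimately show "X i p = Y i p"
      using unit_turns_commute[OF i p, of cw "\<not> cw"] by (auto simp: X_def Y_def)
  next
    have "X i (?nb i) = (if 0 < c ! i then g c else 0)" if "i < ?k" for i
      using that by (simp add: X_def nth_step_unit_turn neighbour_less step_unit_turn_back)
    moreover have "Y i (?nb i) = (if 0 < c ! ?nb i then g c else 0)" if "i < ?k" for i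
      using that step_unit_turn_back[of "?nb i" c "\<not> cw"]
      by (simp add: Y_def nth_step_unit_turn neighbour_less neighbour_neighbour)
    ultimately show "(\<Sum>i<?k. X i (?nb i)) = (\<Sum>i<?k. Y i (?nb i))"
      using sum_reindex_neighbour[of "\<lambda>i. if 0 < c ! i then g c else 0" cw ?k] by simp
  qed (simp add: neighbour_less)
  also have "\<dots> = pass_one (\<not> cw) (pass_one cw g) c"
    unfolding pass_one_def Y_def length_step by (subst sum.swap) (intro sum.cong, auto)
  finally show ?thesis .
qed

lemma card_plays_one_marble_cw_ccw:
  "card (plays True one_marble t c) = card (plays False one_marble t c)"
proof -
  have "pass_one True (pass_one False g) = pass_one False (pass_one True g)" for g
    using pass_one_commute[of True] by auto
  then have commute: "(pass_one True ^^ s) (pass_one False g) = pass_one False ((pass_one True ^^ s) g)"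
    for s g by (induction s) simp_all
  have "(pass_one True ^^ t) (\<lambda>_. 1) = (pass_one False ^^ t) (\<lambda>_. 1)"
  proof (induction t)
    case (Suc t)
    have "(pass_one True ^^ Suc t) (\<lambda>_. 1) = (pass_one True ^^ t) (pass_one True (\<lambda>_. 1))"
      by (simp only: funpow_Suc_right comp_def)
    also have "pass_one True (\<lambda>_. 1) = pass_one False (\<lambda>_. 1)"
      by (simp add: fun_eq_iff pass_one_def)
    also have "(pass_one True ^^ t) (pass_one False (\<lambda>_. 1)) = (pass_one False ^^ Suc t) (\<lambda>_. 1)"
      by (simp only: commute Suc.IH funpow.simps comp_def)
    finally show ?case .
  qed simp
  then show ?thesis by (simp add: card_plays_one_marble)
qed

lemma valid_game_append:
  "valid_game cw P c (xs @ ys) \<longleftrightarrow> valid_game cw P c xs \<and> valid_game cw P (final_arr cw c xs) ys"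
  by (induction xs arbitrary: c) auto

lemma final_arr_append: "final_arr cw c (xs @ ys) = final_arr cw (final_arr cw c xs) ys"
  by (induction xs arbitrary: c) auto

lemma length_final_arr [simp]: "length (final_arr cw c as) = length c"
  by (induction as arbitrary: c) auto

lemma sum_list_final_arr: "valid_game cw P c as \<Longrightarrow> sum_list (final_arr cw c as) = sum_list c"
  by (induction as arbitrary: c) (auto simp: sum_list_step)

definition undo_play :: "bool \<Rightarrow> nat list list \<Rightarrow> nat list list" where
  "undo_play cw as = rev (map (received cw) as)"

lemma undo_play_undo_play [simp]: "undo_play (\<not> cw) (undo_play cw as) = as"
  by (simp add: undo_play_def rev_map comp_def)

lemma length_undo_play [simp]: "length (undo_play cw as) = length as"
  by (simp add: undo_play_def)

lemma valid_game_undo_play: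
  assumes sym: "\<And>a b. mset a = mset b \<Longrightarrow> P a = P b"
    and "valid_game cw P c as"
  shows "valid_game (\<not> cw) P (final_arr cw c as) (undo_play cw as) \<and>
    final_arr (\<not> cw) (final_arr cw c as) (undo_play cw as) = c"
  using assms(2)
proof (induction as arbitrary: c)
  case (Cons a as)
  then have a: "valid_turn c a" "P a" and as: "valid_game cw P (step cw c a) as" by simp_all
  have "undo_play cw (a # as) = undo_play cw as @ [received cw a]"
    by (simp add: undo_play_def)
  moreover have "P (received cw a)" using a(2) sym[of "received cw a" a] by simp
  ultimately show ?case
    using Cons.IH[OF as] valid_turn_received[OF a(1)] step_received[OF a(1)]
    by (simp add: valid_game_append final_arr_append)
qed (simp add: undo_play_def)

lemma card_games_starting:
  assumes "length c = k" "sum_list c = n - k"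
  shows "card (games_starting k n cw P t c) = card (plays cw P t c)"
proof -
  have "games_starting k n cw P t c = Pair c ` plays cw P t c"
  proof (rule set_eqI)
    fix g :: "nat list \<times> nat list list"
    show "g \<in> games_starting k n cw P t c \<longleftrightarrow> g \<in> Pair c ` plays cw P t c"
      using assms by (cases g) (auto simp: games_starting_def games_def plays_def)
  qed
  then show ?thesis by (simp add: card_image inj_on_def)
qed

lemma card_games_ending:
  assumes "length c = k" "sum_list c = n - k"
    and sym: "\<And>a b. mset a = mset b \<Longrightarrow> P a = P b"
  shows "card (games_ending k n cw P t c) = card (plays (\<not> cw) P t c)"
proof -
  note undo = valid_game_undo_play[where P = P, OF sym]
  have "bij_betw (undo_play cw \<circ> snd) (games_ending k n cw P t c) (plays (\<not> cw) P t c)"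
  proof (rule bij_betw_byWitness[where f'="\<lambda>bs. (final_arr (\<not> cw) c bs, undo_play (\<not> cw) bs)"])
    show "\<forall>g\<in>games_ending k n cw P t c. (final_arr (\<not> cw) c ((undo_play cw \<circ> snd) g),
        undo_play (\<not> cw) ((undo_play cw \<circ> snd) g)) = g"
      using undo by (auto simp: games_ending_def games_def)
    show "(undo_play cw \<circ> snd) ` games_ending k n cw P t c \<subseteq> plays (\<not> cw) P t c"
      using undo by (auto simp: games_ending_def games_def plays_def)
    show "(\<lambda>bs. (final_arr (\<not> cw) c bs, undo_play (\<not> cw) bs)) ` plays (\<not> cw) P t c
        \<subseteq> games_ending k n cw P t c"
    proof clarify
      fix bs assume "bs \<in> plays (\<not> cw) P t c"
      then have "length bs = t" "valid_game (\<not> cw) P c bs" by (simp_all add: plays_def)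
      with undo[of "\<not> cw" c bs] sum_list_final_arr[of "\<not> cw" P c bs] assms(1,2)
      show "(final_arr (\<not> cw) c bs, undo_play (\<not> cw) bs) \<in> games_ending k n cw P t c"
        by (simp add: games_ending_def games_def)
    qed
  qed (simp add: undo_play_undo_play[of "\<not> cw", simplified])
  then show ?thesis by (rule bij_betw_same_card)
qed

lemma length_Arr [simp]: "length (Arr k \<alpha>) = k"
  by (simp add: Arr_def)

lemma sum_list_Arr:
  assumes "cylindric k n \<alpha>" "k \<le> n"
  shows "sum_list (Arr k \<alpha>) = n - k"
proof -
  have dec: "\<alpha> (m + 1) \<le> \<alpha> m" and per: "\<alpha> m = \<alpha> (m + int k) + (int n - int k)" for m
    using assms(1) unfolding cylindric_def by blast+
  have "int (sum_list (Arr k \<alpha>)) = (\<Sum>i<k. int (nat (\<alpha> (int i - 1) - \<alpha> (int i))))"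
    by (simp add: Arr_def sum_set_upt_conv_sum_list_nat[symmetric] atLeast0LessThan)
  also have "\<dots> = (\<Sum>i<k. \<alpha> (int i - 1) - \<alpha> (int (Suc i) - 1))"
  proof (rule sum.cong)
    fix i :: nat
    have "\<alpha> (int i) \<le> \<alpha> (int i - 1)" using dec[of "int i - 1"] by simp
    then show "int (nat (\<alpha> (int i - 1) - \<alpha> (int i))) = \<alpha> (int i - 1) - \<alpha> (int (Suc i) - 1)"
      by simp
  qed simp
  also have "\<dots> = \<alpha> (-1) - \<alpha> (int k - 1)"
    by (subst sum_lessThan_telescope'[where f = "\<lambda>i. \<alpha> (int i - 1)"]) simp
  also have "\<dots> = int n - int k"
    using per[of "-1"] by simp
  finally show ?thesis using assms(2) by simp
qed

theorem mainTheorem9: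
  fixes k n t :: nat and \<alpha> :: "int \<Rightarrow> int"
  assumes "1 \<le> k" and "k < n" and "cylindric k n \<alpha>"
  shows "\<forall>P \<in> {(\<lambda>a. True), one_marble}.
     card (games_starting k n True P t (Arr k \<alpha>)) = card (games_ending k n True P t (Arr k \<alpha>)) \<and>
     card (games_ending k n True P t (Arr k \<alpha>)) = card (games_starting k n False P t (Arr k \<alpha>))"
proof
  fix P :: "nat list \<Rightarrow> bool" assume P: "P \<in> {(\<lambda>a. True), one_marble}"
  then have sym: "P a = P b" if "mset a = mset b" for a b
    using that by (auto simp: one_marble_def sum_mset_sum_list[symmetric])
  have cw_ccw: "card (plays True P t (Arr k \<alpha>)) = card (plays False P t (Arr k \<alpha>))"
    using P card_plays_unrestricted_cw_ccw card_plays_one_marble_cw_ccw by auto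
  have arr: "length (Arr k \<alpha>) = k" "sum_list (Arr k \<alpha>) = n - k"
    using assms(2,3) by (simp_all add: sum_list_Arr)
  show "card (games_starting k n True P t (Arr k \<alpha>)) = card (games_ending k n True P t (Arr k \<alpha>)) \<and>
     card (games_ending k n True P t (Arr k \<alpha>)) = card (games_starting k n False P t (Arr k \<alpha>))"
    using card_games_starting[OF arr] card_games_ending[OF arr sym] cw_ccw by simp
qed

end
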